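(* Let $S\subset\mathbb{R}^n_+$ be compact and convex with $0\in S$ and $\overline{S\cap\mathbb{Q}^n}=S$. Let $f=(f_1,\dots,f_n)\colon\mathbb{C}^\ell\to\mathbb{C}^n$ be a polynomial map with no $f_j$ identically zero, write $f_j(z)=\sum_{\alpha\in\mathbb{N}^\ell}a_{j,\alpha}z^\alpha$, let $I_j=\{\alpha\in\mathbb{N}^\ell\,;\,a_{j,\alpha}\neq0\}$, let $S_j\subset\mathbb{R}^\ell_+$ be the convex hull of $I_j$, and let $S'=\bigcup_{x\in S}(x_1S_1+\cdots+x_nS_n)\subset\mathbb{R}^\ell_+$. Then $S'$ is the smallest compact convex subset $T$ of $\mathbb{R}^\ell_+$ with $0\in T$ for which $f^*\big(\mathcal{P}^S_m(\mathbb{C}^n)\big)\subseteq\mathcal{P}^T_m(\mathbb{C}^\ell)$ for all $m\in\mathbb{N}$.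
   Context: $\mathbb{R}_+=[0,\infty)$, $\mathbb{N}=\{0,1,2,\dots\}$. For a subset $T\subset\mathbb{R}^k_+$ and $m\in\mathbb{N}$, $\mathcal{P}^T_m(\mathbb{C}^k)$ is the space of polynomials $\sum_{\alpha\in(mT)\cap\mathbb{N}^k}a_\alpha z^\alpha$. $f^*p=p\circ f$. Minkowski sums and scalar multiples: $x_jS_j=\{x_js\,;\,s\in S_j\}$. *)

theory Defs
  imports "HOL-Analysis.Analysis"
begin

definition monomial_val :: "complex^'k \<Rightarrow> nat^'k \<Rightarrow> complex" where
  "monomial_val z \<alpha> = (\<Prod>i\<in>UNIV. (z$i) ^ (\<alpha>$i))"

definition mi_real :: "nat^'k \<Rightarrow> real^'k" where
  "mi_real \<alpha> = (\<chi> i. real (\<alpha>$i))"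

definition nonneg_orthant :: "(real^'k) set" where
  "nonneg_orthant = {x. \<forall>i. 0 \<le> x$i}"

definition rat_points :: "(real^'k) set" where
  "rat_points = {x. \<forall>i. x$i \<in> \<rat>}"

definition poly_fun :: "(nat^'k \<Rightarrow> complex) \<Rightarrow> complex^'k \<Rightarrow> complex" where
  "poly_fun c z = (\<Sum>\<alpha>\<in>{\<alpha>. c \<alpha> \<noteq> 0}. c \<alpha> * monomial_val z \<alpha>)"

definition poly_space :: "(real^'k) set \<Rightarrow> nat \<Rightarrow> (complex^'k \<Rightarrow> complex) set" where
  "poly_space T m = {p. \<exists>c. finite {\<alpha>. c \<alpha> \<noteq> 0}
      \<and> (\<forall>\<alpha>. c \<alpha> \<noteq> 0 \<longrightarrow> mi_real \<alpha> \<in> (\<lambda>x. real m *\<^sub>R x) ` T)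
      \<and> p = poly_fun c}"

definition poly_map :: "('n \<Rightarrow> nat^'l \<Rightarrow> complex) \<Rightarrow> complex^'l \<Rightarrow> complex^'n" where
  "poly_map a z = (\<chi> j. poly_fun (a j) z)"

definition newton_poly :: "(nat^'l \<Rightarrow> complex) \<Rightarrow> (real^'l) set" where
  "newton_poly c = convex hull (mi_real ` {\<alpha>. c \<alpha> \<noteq> 0})"

definition pullback_set :: "(real^'n) set \<Rightarrow> ('n \<Rightarrow> nat^'l \<Rightarrow> complex) \<Rightarrow> (real^'l) set" where
  "pullback_set S a = (\<Union>x\<in>S. {(\<Sum>j\<in>UNIV. x$j *\<^sub>R s j) | s. \<forall>j. s j \<in> newton_poly (a j)})"

end

theory Submission
  imports Defs
begin

text \<open>Pulling back \<open>z^\<beta>\<close> with \<open>\<beta> \<in> m S\<close> gives \<open>\<Prod>\<^sub>j f\<^sub>j^\<beta>\<^sub>j\<close>, whose exponents lie in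
  \<open>\<beta>\<^sub>1 S\<^sub>1 + \<dots> + \<beta>\<^sub>n S\<^sub>n \<subseteq> m S'\<close>; hence \<open>S'\<close> is admissible. Conversely, let \<open>x \<in> S\<close> be rational
  and \<open>\<beta> = m x\<close> integral. A vertex \<open>e\<close> of \<open>\<beta>\<^sub>1 S\<^sub>1 + \<dots> + \<beta>\<^sub>n S\<^sub>n\<close> is exposed by some \<open>v\<close>,
  and is then \<open>\<Sum>\<^sub>j \<beta>\<^sub>j \<alpha>\<^sub>j\<close> with \<open>\<alpha>\<^sub>j\<close> the unique maximiser of \<open>v\<close> on \<open>S\<^sub>j\<close>. Evaluating along
  \<open>z = (t^v\<^sub>1, \<dots>, t^v\<^sub>l)\<close> as \<open>t \<rightarrow> \<infinity>\<close> shows that the coefficient of \<open>z^e\<close> in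
  \<open>\<Prod>\<^sub>j f\<^sub>j^\<beta>\<^sub>j\<close> is \<open>\<Prod>\<^sub>j a\<^sub>j(\<alpha>\<^sub>j)^\<beta>\<^sub>j \<noteq> 0\<close>; the same asymptotics show that
  coefficients of polynomial functions are unique. So every admissible \<open>T\<close> satisfies
  \<open>m T \<supseteq> \<beta>\<^sub>1 S\<^sub>1 + \<dots> + \<beta>\<^sub>n S\<^sub>n\<close>, i.e. \<open>T \<supseteq> x\<^sub>1 S\<^sub>1 + \<dots> + x\<^sub>n S\<^sub>n\<close>, and density of the
  rational points of \<open>S\<close> together with closedness of \<open>T\<close> gives \<open>S' \<subseteq> T\<close>.\<close>

section \<open>Polynomial functions with prescribed support\<close>

definition supported_polys :: "(nat^'k) set \<Rightarrow> (complex^'k \<Rightarrow> complex) set" where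
  "supported_polys A = {p. \<exists>c. finite {\<alpha>. c \<alpha> \<noteq> 0} \<and> {\<alpha>. c \<alpha> \<noteq> 0} \<subseteq> A \<and> p = poly_fun c}"

abbreviation nat_points :: "(real^'k) set \<Rightarrow> (nat^'k) set" where
  "nat_points C \<equiv> {\<alpha>. mi_real \<alpha> \<in> C}"

lemma mi_real_inject [simp]: "mi_real \<alpha> = mi_real \<beta> \<longleftrightarrow> \<alpha> = \<beta>"
  unfolding mi_real_def by (simp add: vec_eq_iff)

lemma mi_real_add: "mi_real (\<alpha> + \<beta>) = mi_real \<alpha> + mi_real \<beta>"
  unfolding mi_real_def by (simp add: vec_eq_iff)

lemma mi_real_eq_0_iff [simp]: "mi_real \<alpha> = 0 \<longleftrightarrow> \<alpha> = 0"
  unfolding mi_real_def by (simp add: vec_eq_iff)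

lemma poly_fun_eq_sum_superset:
  assumes "finite U" "{\<alpha>. c \<alpha> \<noteq> 0} \<subseteq> U"
  shows "poly_fun c z = (\<Sum>\<alpha>\<in>U. c \<alpha> * monomial_val z \<alpha>)"
  unfolding poly_fun_def by (rule sum.mono_neutral_left) (use assms in auto)

lemma monomial_val_add: "monomial_val z (\<alpha> + \<beta>) = monomial_val z \<alpha> * monomial_val z \<beta>"
  unfolding monomial_val_def by (simp add: power_add prod.distrib)

lemma monomial_val_zero [simp]: "monomial_val z 0 = 1"
  unfolding monomial_val_def by simp

lemma supported_polys_sum_monomials:
  assumes "finite X" "\<And>x. x \<in> X \<Longrightarrow> \<phi> x \<in> A"
  shows "(\<lambda>z. \<Sum>x\<in>X. h x * monomial_val z (\<phi> x)) \<in> supported_polys A"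
proof -
  define c where "c \<gamma> = (\<Sum>x\<in>{x\<in>X. \<phi> x = \<gamma>}. h x)" for \<gamma>
  have supp: "{\<gamma>. c \<gamma> \<noteq> 0} \<subseteq> \<phi> ` X"
  proof
    fix \<gamma> assume "\<gamma> \<in> {\<gamma>. c \<gamma> \<noteq> 0}"
    then have "{x\<in>X. \<phi> x = \<gamma>} \<noteq> {}" unfolding c_def by force
    then show "\<gamma> \<in> \<phi> ` X" by blast
  qed
  have "poly_fun c z = (\<Sum>x\<in>X. h x * monomial_val z (\<phi> x))" for z
  proof -
    have "poly_fun c z = (\<Sum>\<gamma>\<in>\<phi> ` X. c \<gamma> * monomial_val z \<gamma>)"
      using assms(1) supp by (intro poly_fun_eq_sum_superset) auto
    also have "\<dots> = (\<Sum>\<gamma>\<in>\<phi> ` X. \<Sum>x\<in>{x\<in>X. \<phi> x = \<gamma>}. h x * monomial_val z (\<phi> x))"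
      unfolding c_def sum_distrib_right by (intro sum.cong) auto
    also have "\<dots> = (\<Sum>x\<in>X. h x * monomial_val z (\<phi> x))"
      using assms(1) by (rule sum.image_gen[symmetric])
    finally show ?thesis .
  qed
  moreover have "finite {\<gamma>. c \<gamma> \<noteq> 0}"
    using supp assms(1) finite_subset by blast
  ultimately show ?thesis
    unfolding supported_polys_def using supp assms(2) by (intro CollectI exI[of _ c]) auto
qed

lemma supported_polys_mono: "A \<subseteq> B \<Longrightarrow> supported_polys A \<subseteq> supported_polys B"
  unfolding supported_polys_def by blast

lemma supported_polys_const: "(\<lambda>z. k) \<in> supported_polys {0}"
  using supported_polys_sum_monomials[of "{0}" "\<lambda>x. x" "{0}" "\<lambda>_. k"] by simp

lemma supported_polys_add:
  assumes "f \<in> supported_polys A" "g \<in> supported_polys A"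
  shows "(\<lambda>z. f z + g z) \<in> supported_polys A"
proof -
  obtain c where c: "finite {\<alpha>. c \<alpha> \<noteq> 0}" "{\<alpha>. c \<alpha> \<noteq> 0} \<subseteq> A" "f = poly_fun c"
    using assms(1) unfolding supported_polys_def by blast
  obtain d where d: "finite {\<alpha>. d \<alpha> \<noteq> 0}" "{\<alpha>. d \<alpha> \<noteq> 0} \<subseteq> A" "g = poly_fun d"
    using assms(2) unfolding supported_polys_def by blast
  let ?U = "{\<alpha>. c \<alpha> \<noteq> 0} \<union> {\<alpha>. d \<alpha> \<noteq> 0}"
  have "f z + g z = (\<Sum>\<alpha>\<in>?U. (c \<alpha> + d \<alpha>) * monomial_val z \<alpha>)" for z
    using c d by (simp add: poly_fun_eq_sum_superset[of ?U] distrib_right sum.distrib)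
  moreover have "(\<lambda>z. \<Sum>\<alpha>\<in>?U. (c \<alpha> + d \<alpha>) * monomial_val z \<alpha>) \<in> supported_polys A"
    using c d by (intro supported_polys_sum_monomials) auto
  ultimately show ?thesis by simp
qed

lemma supported_polys_sum:
  assumes "finite X" "\<And>x. x \<in> X \<Longrightarrow> F x \<in> supported_polys A"
  shows "(\<lambda>z. \<Sum>x\<in>X. F x z) \<in> supported_polys A"
  using assms
proof (induction X rule: finite_induct)
  case empty
  show ?case
    using supported_polys_sum_monomials[of "{}" _ A "\<lambda>_. 0"] by simp
next
  case (insert x X)
  then show ?case using supported_polys_add[of "F x" A "\<lambda>z. \<Sum>x\<in>X. F x z"] by simp
qed

lemma supported_polys_scale:
  assumes "f \<in> supported_polys A"
  shows "(\<lambda>z. k * f z) \<in> supported_polys A"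
proof -
  obtain c where c: "finite {\<alpha>. c \<alpha> \<noteq> 0}" "{\<alpha>. c \<alpha> \<noteq> 0} \<subseteq> A" "f = poly_fun c"
    using assms unfolding supported_polys_def by blast
  have "k * f z = (\<Sum>\<alpha>\<in>{\<alpha>. c \<alpha> \<noteq> 0}. (k * c \<alpha>) * monomial_val z \<alpha>)" for z
    using c by (simp add: poly_fun_def sum_distrib_left mult.assoc)
  moreover have "(\<lambda>z. \<Sum>\<alpha>\<in>{\<alpha>. c \<alpha> \<noteq> 0}. (k * c \<alpha>) * monomial_val z \<alpha>) \<in> supported_polys A"
    using c by (intro supported_polys_sum_monomials) auto
  ultimately show ?thesis by simp
qed

lemma supported_polys_mult:
  assumes "f \<in> supported_polys A" "g \<in> supported_polys B"
  shows "(\<lambda>z. f z * g z) \<in> supported_polys (A + B)"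
proof -
  obtain c where c: "finite {\<alpha>. c \<alpha> \<noteq> 0}" "{\<alpha>. c \<alpha> \<noteq> 0} \<subseteq> A" "f = poly_fun c"
    using assms(1) unfolding supported_polys_def by blast
  obtain d where d: "finite {\<alpha>. d \<alpha> \<noteq> 0}" "{\<alpha>. d \<alpha> \<noteq> 0} \<subseteq> B" "g = poly_fun d"
    using assms(2) unfolding supported_polys_def by blast
  let ?X = "{\<alpha>. c \<alpha> \<noteq> 0} \<times> {\<alpha>. d \<alpha> \<noteq> 0}"
  have "f z * g z = (\<Sum>(\<alpha>, \<beta>)\<in>?X. (c \<alpha> * d \<beta>) * monomial_val z (\<alpha> + \<beta>))" for z
    unfolding c(3) d(3) poly_fun_def sum_product
    by (simp add: sum.cartesian_product monomial_val_add mult_ac)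
  moreover have "(\<lambda>z. \<Sum>(\<alpha>, \<beta>)\<in>?X. (c \<alpha> * d \<beta>) * monomial_val z (\<alpha> + \<beta>)) \<in> supported_polys (A + B)"
    unfolding case_prod_beta using c d
    by (intro supported_polys_sum_monomials) (auto intro!: set_plus_intro)
  ultimately show ?thesis by simp
qed

lemma poly_space_eq_supported_polys:
  "poly_space T m = supported_polys (nat_points ((\<lambda>x. real m *\<^sub>R x) ` T))"
  unfolding poly_space_def supported_polys_def by blast

section \<open>Uniqueness of coefficients\<close>

definition power_curve :: "real^'k \<Rightarrow> real \<Rightarrow> complex^'k" where
  "power_curve v t = (\<chi> i. complex_of_real (t powr (v$i)))"

lemma monomial_val_power_curve:
  assumes "t > 0"
  shows "monomial_val (power_curve v t) \<alpha> = complex_of_real (t powr (v \<bullet> mi_real \<alpha>))"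
proof -
  have "monomial_val (power_curve v t) \<alpha> = complex_of_real (\<Prod>i\<in>UNIV. (t powr (v$i)) ^ (\<alpha>$i))"
    unfolding monomial_val_def power_curve_def by simp
  also have "(\<Prod>i\<in>UNIV. (t powr (v$i)) ^ (\<alpha>$i)) = (\<Prod>i\<in>UNIV. t powr (v$i * real (\<alpha>$i)))"
    using assms by (intro prod.cong) (auto simp: powr_power mult.commute)
  also have "\<dots> = t powr (v \<bullet> mi_real \<alpha>)"
    using assms by (simp add: powr_sum inner_vec_def mi_real_def)
  finally show ?thesis .
qed

lemma extreme_point_of_polytope_exposed:
  fixes Q :: "'a::euclidean_space set"
  assumes "finite Q" "e extreme_point_of convex hull Q"
  obtains v where "\<And>y. y \<in> convex hull Q \<Longrightarrow> y \<noteq> e \<Longrightarrow> v \<bullet> y < v \<bullet> e"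
proof -
  have "polyhedron (convex hull Q)"
    using assms(1) polytope_def polytope_imp_polyhedron by blast
  moreover have "{e} face_of convex hull Q"
    using assms(2) face_of_singleton by blast
  ultimately have "{e} exposed_face_of convex hull Q"
    using exposed_face_of_polyhedron by blast
  then obtain v b where vb: "convex hull Q \<subseteq> {x. v \<bullet> x \<le> b}" "{e} = convex hull Q \<inter> {x. v \<bullet> x = b}"
    unfolding exposed_face_of_def by blast
  show thesis
  proof (rule that)
    fix y assume "y \<in> convex hull Q" "y \<noteq> e"
    then have "v \<bullet> y \<le> b" "v \<bullet> y \<noteq> b" "v \<bullet> e = b" using vb by blast+
    then show "v \<bullet> y < v \<bullet> e" by linarith
  qed
qed

lemma tendsto_poly_fun_power_curve:
  fixes v :: "real^'k" and F :: "(nat^'k) set"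
  assumes "finite F" "\<epsilon> \<in> F" "\<And>\<alpha>. \<alpha> \<in> F \<Longrightarrow> \<alpha> \<noteq> \<epsilon> \<Longrightarrow> v \<bullet> mi_real \<alpha> < v \<bullet> mi_real \<epsilon>"
  shows "((\<lambda>t. complex_of_real (t powr - (v \<bullet> mi_real \<epsilon>)) *
            (\<Sum>\<alpha>\<in>F. c \<alpha> * monomial_val (power_curve v t) \<alpha>)) \<longlongrightarrow> c \<epsilon>) at_top"
proof -
  define r where "r = v \<bullet> mi_real \<epsilon>"
  have "\<forall>\<^sub>F t in at_top. (\<Sum>\<alpha>\<in>F. c \<alpha> * complex_of_real (t powr (v \<bullet> mi_real \<alpha> - r)))
     = complex_of_real (t powr - r) * (\<Sum>\<alpha>\<in>F. c \<alpha> * monomial_val (power_curve v t) \<alpha>)"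
    using eventually_gt_at_top[of 0]
    by eventually_elim
       (simp add: monomial_val_power_curve sum_distrib_left powr_diff powr_minus divide_inverse mult_ac)
  moreover have "((\<lambda>t. c \<alpha> * complex_of_real (t powr (v \<bullet> mi_real \<alpha> - r)))
      \<longlongrightarrow> (if \<alpha> = \<epsilon> then c \<epsilon> else 0)) at_top" if "\<alpha> \<in> F" for \<alpha>
  proof (cases "\<alpha> = \<epsilon>")
    case True
    have "\<forall>\<^sub>F t in at_top. c \<epsilon> = c \<alpha> * complex_of_real (t powr (v \<bullet> mi_real \<alpha> - r))"
      using eventually_gt_at_top[of 0] by eventually_elim (simp add: True r_def)
    then show ?thesis using True by (simp add: tendsto_eventually)
  next
    case False
    then have "v \<bullet> mi_real \<alpha> - r < 0" using assms(3) that r_def by simp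
    then have "((\<lambda>t. t powr (v \<bullet> mi_real \<alpha> - r)) \<longlongrightarrow> 0) at_top"
      by (rule tendsto_neg_powr[OF _ filterlim_ident])
    then show ?thesis
      using False tendsto_of_real[where 'a=complex] by (fastforce intro: tendsto_mult_right_zero)
  qed
  then have "((\<lambda>t. \<Sum>\<alpha>\<in>F. c \<alpha> * complex_of_real (t powr (v \<bullet> mi_real \<alpha> - r)))
      \<longlongrightarrow> (\<Sum>\<alpha>\<in>F. if \<alpha> = \<epsilon> then c \<epsilon> else 0)) at_top"
    by (rule tendsto_sum)
  ultimately show ?thesis
    using assms(1,2) r_def by (simp add: Lim_transform_eventually)
qed

lemma tendsto_poly_fun_power_curve_exposed:
  assumes "finite {\<alpha>. c \<alpha> \<noteq> 0}" "\<And>\<alpha>. c \<alpha> \<noteq> 0 \<Longrightarrow> mi_real \<alpha> \<in> K"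
    and "\<And>y. y \<in> K \<Longrightarrow> y \<noteq> mi_real \<epsilon> \<Longrightarrow> v \<bullet> y < v \<bullet> mi_real \<epsilon>"
  shows "((\<lambda>t. complex_of_real (t powr - (v \<bullet> mi_real \<epsilon>)) * poly_fun c (power_curve v t)) \<longlongrightarrow> c \<epsilon>) at_top"
proof -
  let ?F = "insert \<epsilon> {\<alpha>. c \<alpha> \<noteq> 0}"
  have "poly_fun c z = (\<Sum>\<alpha>\<in>?F. c \<alpha> * monomial_val z \<alpha>)" for z
    using assms(1) by (intro poly_fun_eq_sum_superset) auto
  moreover have "v \<bullet> mi_real \<alpha> < v \<bullet> mi_real \<epsilon>" if "\<alpha> \<in> ?F" "\<alpha> \<noteq> \<epsilon>" for \<alpha>
    using that assms(2,3) by simp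
  then have "((\<lambda>t. complex_of_real (t powr - (v \<bullet> mi_real \<epsilon>))
      * (\<Sum>\<alpha>\<in>?F. c \<alpha> * monomial_val (power_curve v t) \<alpha>)) \<longlongrightarrow> c \<epsilon>) at_top"
    using assms(1) by (intro tendsto_poly_fun_power_curve) auto
  ultimately show ?thesis
    by simp
qed

lemma poly_fun_eq_0_imp_coeff_eq_0:
  fixes c :: "nat^'k \<Rightarrow> complex"
  assumes fin: "finite {\<alpha>. c \<alpha> \<noteq> 0}" and zero: "\<And>z. poly_fun c z = 0"
  shows "c \<alpha> = 0"
proof (rule ccontr)
  assume "c \<alpha> \<noteq> 0"
  let ?K = "convex hull (mi_real ` {\<alpha>. c \<alpha> \<noteq> 0})"
  have "compact ?K" "?K \<noteq> {}"
    using fin \<open>c \<alpha> \<noteq> 0\<close> by (auto simp: finite_imp_compact_convex_hull)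
  then obtain e where e: "e extreme_point_of ?K"
    using extreme_point_exists_convex by blast
  then obtain \<epsilon> where \<epsilon>: "c \<epsilon> \<noteq> 0" "e = mi_real \<epsilon>"
    using extreme_point_of_convex_hull by blast
  obtain v where "\<And>y. y \<in> ?K \<Longrightarrow> y \<noteq> e \<Longrightarrow> v \<bullet> y < v \<bullet> e"
    using extreme_point_of_polytope_exposed[OF _ e] fin by blast
  then have "((\<lambda>t. complex_of_real (t powr - (v \<bullet> mi_real \<epsilon>)) * poly_fun c (power_curve v t))
      \<longlongrightarrow> c \<epsilon>) at_top"
    using fin \<epsilon>(2) by (intro tendsto_poly_fun_power_curve_exposed[where K = ?K]) (auto intro: hull_inc)
  then have "c \<epsilon> = 0"
    unfolding zero by (simp add: tendsto_const_iff)
  then show False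
    using \<epsilon>(1) by simp
qed

lemma poly_fun_coeffs_unique:
  fixes c d :: "nat^'k \<Rightarrow> complex"
  assumes "finite {\<alpha>. c \<alpha> \<noteq> 0}" "finite {\<alpha>. d \<alpha> \<noteq> 0}" "poly_fun c = poly_fun d"
  shows "c = d"
proof -
  let ?U = "{\<alpha>. c \<alpha> \<noteq> 0} \<union> {\<alpha>. d \<alpha> \<noteq> 0}"
  define e where "e \<alpha> = c \<alpha> - d \<alpha>" for \<alpha>
  have supp: "{\<alpha>. e \<alpha> \<noteq> 0} \<subseteq> ?U"
    unfolding e_def by auto
  have "poly_fun e z = poly_fun c z - poly_fun d z" for z
  proof -
    have "poly_fun e z = (\<Sum>\<alpha>\<in>?U. e \<alpha> * monomial_val z \<alpha>)"
      using assms(1,2) supp by (intro poly_fun_eq_sum_superset) auto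
    also have "\<dots> = poly_fun c z - poly_fun d z"
      using assms(1,2) by (simp add: poly_fun_eq_sum_superset[of ?U] e_def left_diff_distrib sum_subtractf)
    finally show ?thesis .
  qed
  then have zero: "poly_fun e z = 0" for z
    using assms(3) by simp
  have "finite {\<alpha>. e \<alpha> \<noteq> 0}"
    using assms(1,2) supp finite_subset by blast
  then have "e \<alpha> = 0" for \<alpha>
    using zero by (rule poly_fun_eq_0_imp_coeff_eq_0)
  then show ?thesis
    unfolding e_def by (simp add: fun_eq_iff)
qed

section \<open>Scaled Minkowski sums\<close>

definition scaled_set_sum :: "'i set \<Rightarrow> ('i \<Rightarrow> real) \<Rightarrow> ('i \<Rightarrow> 'v::real_vector set) \<Rightarrow> 'v set" where
  "scaled_set_sum J x A = {(\<Sum>j\<in>J. x j *\<^sub>R s j) | s. \<forall>j\<in>J. s j \<in> A j}"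

lemma scaled_set_sum_eq_set_sum:
  assumes "finite J"
  shows "scaled_set_sum J x A = (\<Sum>j\<in>J. (\<lambda>v. x j *\<^sub>R v) ` A j)"
  unfolding scaled_set_sum_def set_sum_alt[OF assms]
proof (intro set_eqI iffI)
  fix y assume "y \<in> {\<Sum>j\<in>J. x j *\<^sub>R s j |s. \<forall>j\<in>J. s j \<in> A j}"
  then obtain s where "\<forall>j\<in>J. s j \<in> A j" "y = (\<Sum>j\<in>J. x j *\<^sub>R s j)"
    by blast
  then show "y \<in> {sum s J |s. \<forall>j\<in>J. s j \<in> (\<lambda>v. x j *\<^sub>R v) ` A j}"
    by (intro CollectI exI[of _ "\<lambda>j. x j *\<^sub>R s j"]) auto
next
  fix y assume "y \<in> {sum s J |s. \<forall>j\<in>J. s j \<in> (\<lambda>v. x j *\<^sub>R v) ` A j}"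
  then obtain s where s: "\<forall>j\<in>J. \<exists>a\<in>A j. s j = x j *\<^sub>R a" "y = sum s J"
    by blast
  then obtain a where "\<forall>j\<in>J. a j \<in> A j \<and> s j = x j *\<^sub>R a j"
    by metis
  with s(2) show "y \<in> {\<Sum>j\<in>J. x j *\<^sub>R s j |s. \<forall>j\<in>J. s j \<in> A j}"
    by (auto intro!: exI[of _ a] sum.cong)
qed

lemma scaled_set_sum_empty [simp]: "scaled_set_sum {} x A = {0}"
  unfolding scaled_set_sum_def by simp

lemma scaled_set_sum_insert:
  assumes "finite J" "i \<notin> J"
  shows "scaled_set_sum (insert i J) x A = (\<lambda>v. x i *\<^sub>R v) ` A i + scaled_set_sum J x A"
  using assms by (simp add: scaled_set_sum_eq_set_sum)

lemma convex_hull_scaled_set_sum: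
  assumes "finite J"
  shows "convex hull (scaled_set_sum J x A) = scaled_set_sum J x (\<lambda>j. convex hull A j)"
  using assms by (simp add: scaled_set_sum_eq_set_sum convex_hull_set_sum convex_hull_scaling)

lemma finite_scaled_set_sum:
  assumes "finite J" "\<And>j. j \<in> J \<Longrightarrow> finite (A j)"
  shows "finite (scaled_set_sum J x A)"
  using assms by (simp add: scaled_set_sum_eq_set_sum finite_set_sum)

lemma exposed_scaled_set_sum_summand:
  fixes v :: "'v::real_inner"
  assumes exposed: "\<And>y. y \<in> scaled_set_sum J b Q \<Longrightarrow> y \<noteq> e \<Longrightarrow> v \<bullet> y < v \<bullet> e"
    and e: "e = (\<Sum>i\<in>J. b i *\<^sub>R s i)" "\<forall>i\<in>J. s i \<in> Q i"
    and j: "finite J" "j \<in> J" "b j > 0" "q \<in> Q j" "q \<noteq> s j"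
  shows "v \<bullet> q < v \<bullet> s j"
proof -
  define e' where "e' = (\<Sum>i\<in>J. b i *\<^sub>R (s(j := q)) i)"
  have "e' \<in> scaled_set_sum J b Q"
    unfolding scaled_set_sum_def e'_def using e(2) j(4) by auto
  have "e' - e = (\<Sum>i\<in>J. b i *\<^sub>R ((s(j := q)) i - s i))"
    unfolding e'_def e(1) by (simp add: sum_subtractf scaleR_diff_right)
  also have "\<dots> = b j *\<^sub>R (q - s j)"
    using j(1,2) by (subst sum.remove[of _ j]) auto
  finally have diff: "e' - e = b j *\<^sub>R (q - s j)" .
  then have "e' \<noteq> e"
    using j(3,5) by auto
  then have "v \<bullet> (e' - e) < 0"
    using exposed \<open>e' \<in> _\<close> by (simp add: inner_diff_right)
  then have "b j * (v \<bullet> q - v \<bullet> s j) < 0"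
    by (simp add: diff inner_diff_right)
  then show ?thesis
    using j(3) by (simp add: mult_less_0_iff)
qed

lemma convex_scaled_add:
  assumes "convex N" "p \<in> N" "q \<in> N" "0 \<le> a" "0 \<le> b"
  obtains r where "r \<in> N" "a *\<^sub>R p + b *\<^sub>R q = (a + b) *\<^sub>R r"
proof (cases "a + b = 0")
  case True
  then have "a = 0" "b = 0"
    using assms(4,5) by linarith+
  then show thesis
    using that[of p] assms(2) by simp
next
  case False
  then have "a / (a + b) + b / (a + b) = 1"
    by (simp add: add_divide_distrib[symmetric])
  then have "(a / (a + b)) *\<^sub>R p + (b / (a + b)) *\<^sub>R q \<in> N"
    using assms by (intro convexD) auto
  moreover have "a *\<^sub>R p + b *\<^sub>R q = (a + b) *\<^sub>R ((a / (a + b)) *\<^sub>R p + (b / (a + b)) *\<^sub>R q)"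
    using False by (simp add: scaleR_add_right)
  ultimately show thesis by (rule that)
qed

lemma convex_UN_scaled_set_sum:
  fixes S :: "(real^'n) set" and N :: "'n \<Rightarrow> 'v::real_vector set"
  assumes "convex S" "S \<subseteq> nonneg_orthant" "\<And>j. convex (N j)"
  shows "convex (\<Union>x\<in>S. scaled_set_sum UNIV (\<lambda>j. x$j) N)"
proof (rule convexI)
  fix y1 y2 and u v :: real
  assume "y1 \<in> (\<Union>x\<in>S. scaled_set_sum UNIV (\<lambda>j. x$j) N)" "y2 \<in> (\<Union>x\<in>S. scaled_set_sum UNIV (\<lambda>j. x$j) N)"
    and uv: "0 \<le> u" "0 \<le> v" "u + v = 1"
  then obtain x1 s1 x2 s2 where
    x1: "x1 \<in> S" "\<forall>j. s1 j \<in> N j" "y1 = (\<Sum>j\<in>UNIV. x1$j *\<^sub>R s1 j)" and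
    x2: "x2 \<in> S" "\<forall>j. s2 j \<in> N j" "y2 = (\<Sum>j\<in>UNIV. x2$j *\<^sub>R s2 j)"
    unfolding scaled_set_sum_def by blast
  define x where "x = u *\<^sub>R x1 + v *\<^sub>R x2"
  have "x \<in> S"
    unfolding x_def using assms(1) x1(1) x2(1) uv by (simp add: convexD)
  have "0 \<le> x1$j" "0 \<le> x2$j" for j
    using assms(2) x1(1) x2(1) unfolding nonneg_orthant_def by auto
  have "\<exists>r. r \<in> N j \<and> (u * x1$j) *\<^sub>R s1 j + (v * x2$j) *\<^sub>R s2 j = x$j *\<^sub>R r" for j
  proof -
    obtain r where "r \<in> N j" "(u * x1$j) *\<^sub>R s1 j + (v * x2$j) *\<^sub>R s2 j = (u * x1$j + v * x2$j) *\<^sub>R r"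
      using convex_scaled_add[OF assms(3) x1(2)[rule_format, of j] x2(2)[rule_format, of j]]
        uv \<open>0 \<le> x1$j\<close> \<open>0 \<le> x2$j\<close> by (metis mult_nonneg_nonneg)
    then show ?thesis
      unfolding x_def by auto
  qed
  then obtain r where r: "\<And>j. r j \<in> N j" "\<And>j. (u * x1$j) *\<^sub>R s1 j + (v * x2$j) *\<^sub>R s2 j = x$j *\<^sub>R r j"
    by metis
  have "u *\<^sub>R y1 + v *\<^sub>R y2 = (\<Sum>j\<in>UNIV. x$j *\<^sub>R r j)"
    unfolding x1(3) x2(3) r(2)[symmetric] by (simp add: scaleR_sum_right sum.distrib)
  then show "u *\<^sub>R y1 + v *\<^sub>R y2 \<in> (\<Union>x\<in>S. scaled_set_sum UNIV (\<lambda>j. x$j) N)"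
    using \<open>x \<in> S\<close> r(1) unfolding scaled_set_sum_def by blast
qed

lemma compact_UN_scaled_set_sum:
  fixes S :: "(real^'n) set" and N :: "'n \<Rightarrow> 'v::euclidean_space set"
  assumes "compact S" "\<And>j. compact (N j)"
  shows "compact (\<Union>x\<in>S. scaled_set_sum UNIV (\<lambda>j. x$j) N)"
proof -
  define D where "D J = (SIGMA x:S. scaled_set_sum J (\<lambda>j. x$j) N)" for J
  have "compact (D J)" if "finite J" for J
    using that
  proof (induction J rule: finite_induct)
    case empty
    show ?case using assms(1) by (simp add: D_def compact_Times)
  next
    case (insert i J)
    let ?f = "\<lambda>((x, y), s). (x, x$i *\<^sub>R s + y)"
    have "D (insert i J) = ?f ` (D J \<times> N i)"
      unfolding D_def scaled_set_sum_insert[OF insert(1,2)] set_plus_def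
      by (auto simp: image_iff) (metis add.commute)
    moreover have "compact (?f ` (D J \<times> N i))"
      unfolding case_prod_beta
      by (intro compact_continuous_image continuous_intros compact_Times insert(3) assms(2))
    ultimately show ?case by simp
  qed
  then have "compact (snd ` D UNIV)"
    by (intro compact_continuous_image continuous_intros) simp
  moreover have "snd ` D UNIV = (\<Union>x\<in>S. scaled_set_sum UNIV (\<lambda>j. x$j) N)"
    unfolding D_def by force
  ultimately show ?thesis by simp
qed

section \<open>Newton polytopes of products\<close>

lemma nat_points_plus_subset: "nat_points A + nat_points B \<subseteq> nat_points (A + B)"
proof
  fix \<gamma> assume "\<gamma> \<in> nat_points A + nat_points B"
  then obtain \<alpha> \<beta> where "mi_real \<alpha> \<in> A" "mi_real \<beta> \<in> B" "\<gamma> = \<alpha> + \<beta>"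
    by (auto elim: set_plus_elim)
  then show "\<gamma> \<in> nat_points (A + B)"
    by (simp add: mi_real_add set_plus_intro)
qed

lemma supported_polys_nat_points_mono:
  "A \<subseteq> B \<Longrightarrow> supported_polys (nat_points A) \<subseteq> supported_polys (nat_points B)"
  by (rule supported_polys_mono) blast

lemma supported_polys_power:
  assumes "convex C" "C \<noteq> {}" "f \<in> supported_polys (nat_points C)"
  shows "(\<lambda>z. f z ^ k) \<in> supported_polys (nat_points ((\<lambda>x. real k *\<^sub>R x) ` C))"
proof (induction k)
  case 0
  have "{0} \<subseteq> nat_points ((\<lambda>x. real 0 *\<^sub>R x) ` C)"
    using assms(2) by (auto simp: mi_real_def vec_eq_iff)
  then show ?case
    unfolding power_0 using supported_polys_mono supported_polys_const[of 1] by blast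
next
  case (Suc k)
  have "C + (\<lambda>x. real k *\<^sub>R x) ` C \<subseteq> (\<lambda>x. real (Suc k) *\<^sub>R x) ` C"
  proof
    fix y assume "y \<in> C + (\<lambda>x. real k *\<^sub>R x) ` C"
    then obtain p q where "p \<in> C" "q \<in> C" "y = 1 *\<^sub>R p + real k *\<^sub>R q"
      by (auto simp: set_plus_def)
    then obtain r where "r \<in> C" "y = (1 + real k) *\<^sub>R r"
      using convex_scaled_add[OF assms(1)] by (metis of_nat_0_le_iff zero_le_one)
    then show "y \<in> (\<lambda>x. real (Suc k) *\<^sub>R x) ` C"
      by (simp add: add.commute)
  qed
  then have "nat_points C + nat_points ((\<lambda>x. real k *\<^sub>R x) ` C)
      \<subseteq> nat_points ((\<lambda>x. real (Suc k) *\<^sub>R x) ` C)"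
    using nat_points_plus_subset by blast
  then show ?case
    using supported_polys_mult[OF assms(3) Suc] supported_polys_mono by auto
qed

lemma supported_polys_prod_power:
  assumes "finite J" "\<And>j. convex (C j)" "\<And>j. C j \<noteq> {}" "\<And>j. f j \<in> supported_polys (nat_points (C j))"
  shows "(\<lambda>z. \<Prod>j\<in>J. f j z ^ \<beta> j) \<in> supported_polys (nat_points (scaled_set_sum J (\<lambda>j. real (\<beta> j)) C))"
  using assms(1)
proof (induction J rule: finite_induct)
  case empty
  show ?case using supported_polys_const[of 1] by simp
next
  case (insert i J)
  have "(\<lambda>z. f i z ^ \<beta> i * (\<Prod>j\<in>J. f j z ^ \<beta> j)) \<in> supported_polys
      (nat_points ((\<lambda>x. real (\<beta> i) *\<^sub>R x) ` C i) + nat_points (scaled_set_sum J (\<lambda>j. real (\<beta> j)) C))"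
    by (rule supported_polys_mult[OF supported_polys_power[OF assms(2-4)] insert(3)])
  moreover have "nat_points ((\<lambda>x. real (\<beta> i) *\<^sub>R x) ` C i) + nat_points (scaled_set_sum J (\<lambda>j. real (\<beta> j)) C)
      \<subseteq> nat_points (scaled_set_sum (insert i J) (\<lambda>j. real (\<beta> j)) C)"
    unfolding scaled_set_sum_insert[OF insert(1,2)] by (rule nat_points_plus_subset)
  ultimately have "(\<lambda>z. f i z ^ \<beta> i * (\<Prod>j\<in>J. f j z ^ \<beta> j))
      \<in> supported_polys (nat_points (scaled_set_sum (insert i J) (\<lambda>j. real (\<beta> j)) C))"
    using supported_polys_mono by blast
  then show ?case
    using insert(1,2) by simp
qed

lemma tendsto_prod_power_powr:
  fixes f :: "'j \<Rightarrow> real \<Rightarrow> complex"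
  assumes "finite J"
    and "\<And>j. j \<in> J \<Longrightarrow> \<beta> j \<noteq> 0 \<Longrightarrow> ((\<lambda>t. complex_of_real (t powr - M j) * f j t) \<longlongrightarrow> L j) at_top"
  shows "((\<lambda>t. complex_of_real (t powr - (\<Sum>j\<in>J. real (\<beta> j) * M j)) * (\<Prod>j\<in>J. f j t ^ \<beta> j))
      \<longlongrightarrow> (\<Prod>j\<in>J. L j ^ \<beta> j)) at_top"
proof -
  have "((\<lambda>t. (complex_of_real (t powr - M j) * f j t) ^ \<beta> j) \<longlongrightarrow> L j ^ \<beta> j) at_top" if "j \<in> J" for j
    using assms(2)[OF that] by (cases "\<beta> j = 0") (auto intro: tendsto_power)
  then have "((\<lambda>t. \<Prod>j\<in>J. (complex_of_real (t powr - M j) * f j t) ^ \<beta> j) \<longlongrightarrow> (\<Prod>j\<in>J. L j ^ \<beta> j)) at_top"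
    by (rule tendsto_prod)
  moreover have "\<forall>\<^sub>F t in at_top. (\<Prod>j\<in>J. (complex_of_real (t powr - M j) * f j t) ^ \<beta> j)
      = complex_of_real (t powr - (\<Sum>j\<in>J. real (\<beta> j) * M j)) * (\<Prod>j\<in>J. f j t ^ \<beta> j)"
    using eventually_gt_at_top[of 0]
  proof eventually_elim
    case (elim t)
    have "(\<Prod>j\<in>J. (t powr - M j) ^ \<beta> j) = (\<Prod>j\<in>J. t powr - (real (\<beta> j) * M j))"
      using elim by (intro prod.cong) (simp_all add: powr_power)
    also have "\<dots> = t powr - (\<Sum>j\<in>J. real (\<beta> j) * M j)"
      using elim by (simp add: powr_sum flip: sum_negf)
    finally have "(\<Prod>j\<in>J. (t powr - M j) ^ \<beta> j) = t powr - (\<Sum>j\<in>J. real (\<beta> j) * M j)" .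
    moreover have "(\<Prod>j\<in>J. (complex_of_real (t powr - M j) * f j t) ^ \<beta> j)
        = complex_of_real (\<Prod>j\<in>J. (t powr - M j) ^ \<beta> j) * (\<Prod>j\<in>J. f j t ^ \<beta> j)"
      by (simp add: power_mult_distrib prod.distrib)
    ultimately show ?case
      by simp
  qed
  ultimately show ?thesis
    by (rule Lim_transform_eventually)
qed

lemma convex_newton_poly: "convex (newton_poly c)"
  unfolding newton_poly_def by simp

lemma compact_newton_poly: "finite {\<alpha>. c \<alpha> \<noteq> 0} \<Longrightarrow> compact (newton_poly c)"
  unfolding newton_poly_def by (simp add: finite_imp_compact_convex_hull)

lemma newton_poly_eq_empty_iff: "newton_poly c = {} \<longleftrightarrow> (\<forall>\<alpha>. c \<alpha> = 0)"
  unfolding newton_poly_def by simp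

lemma poly_fun_in_supported_polys_newton_poly:
  "finite {\<alpha>. c \<alpha> \<noteq> 0} \<Longrightarrow> poly_fun c \<in> supported_polys (nat_points (newton_poly c))"
  unfolding supported_polys_def newton_poly_def by (auto intro: hull_inc)

lemma supported_polys_prod_power_newton_poly:
  assumes "finite J" "\<And>j. finite {\<alpha>. a j \<alpha> \<noteq> 0}" "\<And>j. {\<alpha>. a j \<alpha> \<noteq> 0} \<noteq> {}"
  shows "(\<lambda>z. \<Prod>j\<in>J. poly_fun (a j) z ^ \<beta> j)
    \<in> supported_polys (nat_points (scaled_set_sum J (\<lambda>j. real (\<beta> j)) (\<lambda>j. newton_poly (a j))))"
proof (rule supported_polys_prod_power)
  show "newton_poly (a j) \<noteq> {}" for j
    using assms(3) by (simp add: newton_poly_eq_empty_iff)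
  show "poly_fun (a j) \<in> supported_polys (nat_points (newton_poly (a j)))" for j
    using assms(2) by (rule poly_fun_in_supported_polys_newton_poly)
qed (use assms(1) convex_newton_poly in auto)

text \<open>Compare leading terms along the power curve in a direction \<open>v\<close> exposing \<open>e\<close>: on the
  left it is \<open>d \<epsilon>\<close>, on the right the product of the leading coefficients \<open>a j (\<alpha> j)\<close> of the
  factors, where \<open>\<alpha> j\<close> is the unique maximiser of \<open>v\<close> on the support of \<open>a j\<close>.\<close>
lemma extreme_point_in_support:
  fixes a :: "'n::finite \<Rightarrow> nat^'l \<Rightarrow> complex" and \<beta> :: "'n \<Rightarrow> nat"
  defines "P \<equiv> scaled_set_sum UNIV (\<lambda>j. real (\<beta> j)) (\<lambda>j. mi_real ` {\<alpha>. a j \<alpha> \<noteq> 0})"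
  assumes fin: "\<And>j. finite {\<alpha>. a j \<alpha> \<noteq> 0}"
    and d: "finite {\<gamma>. d \<gamma> \<noteq> 0}" "\<And>\<gamma>. d \<gamma> \<noteq> 0 \<Longrightarrow> mi_real \<gamma> \<in> convex hull P"
    and prod: "\<And>z. poly_fun d z = (\<Prod>j\<in>UNIV. poly_fun (a j) z ^ \<beta> j)"
    and e: "e extreme_point_of convex hull P"
  obtains \<epsilon> where "d \<epsilon> \<noteq> 0" "mi_real \<epsilon> = e"
proof -
  have "finite P"
    unfolding P_def using fin by (intro finite_scaled_set_sum) auto
  then obtain v where v: "\<And>y. y \<in> convex hull P \<Longrightarrow> y \<noteq> e \<Longrightarrow> v \<bullet> y < v \<bullet> e"
    using extreme_point_of_polytope_exposed e by blast
  have "e \<in> P"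
    using e by (rule extreme_point_of_convex_hull)
  then obtain s where s: "\<forall>j. s j \<in> mi_real ` {\<alpha>. a j \<alpha> \<noteq> 0}" "e = (\<Sum>j\<in>UNIV. real (\<beta> j) *\<^sub>R s j)"
    unfolding P_def scaled_set_sum_def by blast
  then have "\<forall>j. \<exists>\<alpha>. a j \<alpha> \<noteq> 0 \<and> s j = mi_real \<alpha>"
    by blast
  then obtain \<alpha> where \<alpha>: "\<And>j. a j (\<alpha> j) \<noteq> 0" "\<And>j. s j = mi_real (\<alpha> j)"
    by metis
  define \<epsilon> where "\<epsilon> = (\<chi> i. \<Sum>j\<in>UNIV. \<beta> j * \<alpha> j $ i)"
  have \<epsilon>: "mi_real \<epsilon> = e"
    unfolding s(2) \<epsilon>_def by (simp add: vec_eq_iff \<alpha>(2) mi_real_def)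
  define M where "M j = v \<bullet> s j" for j
  have leading: "((\<lambda>t. complex_of_real (t powr - M j) * poly_fun (a j) (power_curve v t)) \<longlongrightarrow> a j (\<alpha> j)) at_top"
    if "\<beta> j \<noteq> 0" for j
    unfolding M_def \<alpha>(2)
  proof (rule tendsto_poly_fun_power_curve_exposed[OF fin])
    fix y assume "y \<in> mi_real ` {\<alpha>. a j \<alpha> \<noteq> 0}" "y \<noteq> mi_real (\<alpha> j)"
    moreover have "v \<bullet> y < v \<bullet> e" if "y \<in> P" "y \<noteq> e" for y
      using v that by (simp add: hull_inc)
    ultimately show "v \<bullet> y < v \<bullet> mi_real (\<alpha> j)"
      using exposed_scaled_set_sum_summand[of UNIV "\<lambda>j. real (\<beta> j)" _ e v s j y]
        s \<alpha>(2) \<open>\<beta> j \<noteq> 0\<close> unfolding P_def by auto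
  qed simp
  have ve: "v \<bullet> e = (\<Sum>j\<in>UNIV. real (\<beta> j) * M j)"
    unfolding s(2) M_def by (simp add: inner_sum_right)
  have lim_prod: "((\<lambda>t. complex_of_real (t powr - (v \<bullet> mi_real \<epsilon>)) * poly_fun d (power_curve v t))
      \<longlongrightarrow> (\<Prod>j\<in>UNIV. a j (\<alpha> j) ^ \<beta> j)) at_top"
    unfolding prod \<epsilon> ve by (rule tendsto_prod_power_powr) (use leading in auto)
  have lim_d: "((\<lambda>t. complex_of_real (t powr - (v \<bullet> mi_real \<epsilon>)) * poly_fun d (power_curve v t))
      \<longlongrightarrow> d \<epsilon>) at_top"
    using d v \<epsilon> by (intro tendsto_poly_fun_power_curve_exposed[where K = "convex hull P"]) auto
  have "d \<epsilon> = (\<Prod>j\<in>UNIV. a j (\<alpha> j) ^ \<beta> j)"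
    using trivial_limit_at_top_linorder lim_d lim_prod by (rule tendsto_unique)
  then have "d \<epsilon> \<noteq> 0"
    using \<alpha>(1) by simp
  then show thesis
    using \<epsilon> by (rule that)
qed

lemma scaled_newton_sum_subset:
  fixes a :: "'n::finite \<Rightarrow> nat^'l \<Rightarrow> complex" and \<beta> :: "'n \<Rightarrow> nat"
  assumes fin: "\<And>j. finite {\<alpha>. a j \<alpha> \<noteq> 0}" and ne: "\<And>j. {\<alpha>. a j \<alpha> \<noteq> 0} \<noteq> {}"
    and "convex C" and "(\<lambda>z. \<Prod>j\<in>UNIV. poly_fun (a j) z ^ \<beta> j) \<in> supported_polys (nat_points C)"
  shows "scaled_set_sum UNIV (\<lambda>j. real (\<beta> j)) (\<lambda>j. newton_poly (a j)) \<subseteq> C"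
proof -
  let ?P = "scaled_set_sum UNIV (\<lambda>j. real (\<beta> j)) (\<lambda>j. mi_real ` {\<alpha>. a j \<alpha> \<noteq> 0})"
  have hull: "convex hull ?P = scaled_set_sum UNIV (\<lambda>j. real (\<beta> j)) (\<lambda>j. newton_poly (a j))"
    unfolding newton_poly_def by (simp add: convex_hull_scaled_set_sum)
  have "(\<lambda>z. \<Prod>j\<in>UNIV. poly_fun (a j) z ^ \<beta> j) \<in> supported_polys (nat_points (convex hull ?P))"
    unfolding hull by (rule supported_polys_prod_power_newton_poly[OF _ fin ne]) simp
  then obtain d where d: "finite {\<gamma>. d \<gamma> \<noteq> 0}" "\<And>\<gamma>. d \<gamma> \<noteq> 0 \<Longrightarrow> mi_real \<gamma> \<in> convex hull ?P"
      "(\<lambda>z. \<Prod>j\<in>UNIV. poly_fun (a j) z ^ \<beta> j) = poly_fun d"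
    unfolding supported_polys_def by blast
  obtain c where c: "finite {\<gamma>. c \<gamma> \<noteq> 0}" "\<And>\<gamma>. c \<gamma> \<noteq> 0 \<Longrightarrow> mi_real \<gamma> \<in> C"
      "(\<lambda>z. \<Prod>j\<in>UNIV. poly_fun (a j) z ^ \<beta> j) = poly_fun c"
    using assms(4) unfolding supported_polys_def by blast
  have "c = d"
    using c(1,3) d(1,3) by (intro poly_fun_coeffs_unique) auto
  have prod_d: "poly_fun d z = (\<Prod>j\<in>UNIV. poly_fun (a j) z ^ \<beta> j)" for z
    using d(3) by metis
  have "{e. e extreme_point_of convex hull ?P} \<subseteq> C"
  proof (intro subsetI, unfold mem_Collect_eq)
    fix e assume "e extreme_point_of convex hull ?P"
    obtain \<epsilon> where "d \<epsilon> \<noteq> 0" "mi_real \<epsilon> = e"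
      using extreme_point_in_support[OF fin d(1,2) prod_d \<open>e extreme_point_of _\<close>] by blast
    then show "e \<in> C"
      using c(2) \<open>c = d\<close> by blast
  qed
  then have "convex hull {e. e extreme_point_of convex hull ?P} \<subseteq> C"
    using assms(3) by (rule hull_minimal)
  moreover have "convex hull ?P = convex hull {e. e extreme_point_of convex hull ?P}"
    using fin by (intro Krein_Milman_Minkowski finite_imp_compact_convex_hull finite_scaled_set_sum) auto
  ultimately have "convex hull ?P \<subseteq> C"
    by simp
  then show ?thesis
    unfolding hull .
qed

section \<open>The pulled-back polytope\<close>

lemma scaled_set_sum_scale:
  "scaled_set_sum J (\<lambda>j. c * x j) A = (\<lambda>y. c *\<^sub>R y) ` scaled_set_sum J x A"
proof -
  have scale: "(\<Sum>j\<in>J. (c * x j) *\<^sub>R s j) = c *\<^sub>R (\<Sum>j\<in>J. x j *\<^sub>R s j)" for s :: "_ \<Rightarrow> 'a::real_vector"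
    by (simp add: scaleR_sum_right)
  show ?thesis
    unfolding scaled_set_sum_def scale by blast
qed

lemma pullback_set_eq:
  "pullback_set S a = (\<Union>x\<in>S. scaled_set_sum UNIV (\<lambda>j. x$j) (\<lambda>j. newton_poly (a j)))"
  unfolding pullback_set_def scaled_set_sum_def by auto

lemma monomial_val_poly_map:
  "monomial_val (poly_map a z) \<beta> = (\<Prod>j\<in>UNIV. poly_fun (a j) z ^ (\<beta>$j))"
  unfolding monomial_val_def poly_map_def by simp

lemma convex_nonneg_orthant: "convex nonneg_orthant"
  unfolding convex_def nonneg_orthant_def by simp

lemma newton_poly_subset_nonneg_orthant: "newton_poly c \<subseteq> nonneg_orthant"
  unfolding newton_poly_def
  by (rule hull_minimal[where S=convex, OF _ convex_nonneg_orthant]) (auto simp: nonneg_orthant_def mi_real_def)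

lemma pullback_set_subset_nonneg_orthant:
  assumes "S \<subseteq> nonneg_orthant"
  shows "pullback_set S a \<subseteq> nonneg_orthant"
proof
  fix y assume "y \<in> pullback_set S a"
  then obtain x s where xs: "x \<in> S" "\<forall>j. s j \<in> newton_poly (a j)" "y = (\<Sum>j\<in>UNIV. x$j *\<^sub>R s j)"
    unfolding pullback_set_def by blast
  have "0 \<le> x$j" "0 \<le> s j $ i" for i j
    using assms xs(1,2) newton_poly_subset_nonneg_orthant unfolding nonneg_orthant_def by blast+
  then show "y \<in> nonneg_orthant"
    unfolding nonneg_orthant_def xs(3) by (auto intro!: sum_nonneg)
qed

lemma zero_in_pullback_set:
  fixes a :: "'n::finite \<Rightarrow> nat^'l \<Rightarrow> complex"
  assumes "0 \<in> S" "\<And>j. {\<alpha>. a j \<alpha> \<noteq> 0} \<noteq> {}"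
  shows "0 \<in> pullback_set S a"
proof -
  have "newton_poly (a j) \<noteq> {}" for j
    using assms(2) by (simp add: newton_poly_eq_empty_iff)
  then have "\<forall>j. (SOME s. s \<in> newton_poly (a j)) \<in> newton_poly (a j)"
    by (simp add: some_in_eq)
  then have "(0::real^'l) \<in> {\<Sum>j\<in>UNIV. (0::real^'n)$j *\<^sub>R s j | s. \<forall>j. s j \<in> newton_poly (a j)}"
    by (intro CollectI exI[of _ "\<lambda>j. SOME s. s \<in> newton_poly (a j)"]) simp
  then show ?thesis
    unfolding pullback_set_def using assms(1) by blast
qed

lemma scaled_set_sum_mi_real:
  assumes "mi_real \<beta> = c *\<^sub>R x"
  shows "scaled_set_sum J (\<lambda>j. real (\<beta>$j)) N = (\<lambda>y. c *\<^sub>R y) ` scaled_set_sum J (\<lambda>j. x$j) N"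
proof -
  have "(\<lambda>j. real (\<beta>$j)) = (\<lambda>j. c * x$j)"
    using assms by (auto simp: mi_real_def vec_eq_iff)
  then show ?thesis
    by (simp add: scaled_set_sum_scale)
qed

lemma pullback_monomial_in_supported_polys:
  assumes "\<And>j. finite {\<alpha>. a j \<alpha> \<noteq> 0}" "\<And>j. {\<alpha>. a j \<alpha> \<noteq> 0} \<noteq> {}"
    and "x \<in> S" "mi_real \<beta> = real m *\<^sub>R x"
  shows "(\<lambda>z. monomial_val (poly_map a z) \<beta>)
    \<in> supported_polys (nat_points ((\<lambda>y. real m *\<^sub>R y) ` pullback_set S a))"
proof -
  have "(\<lambda>z. monomial_val (poly_map a z) \<beta>)
      \<in> supported_polys (nat_points (scaled_set_sum UNIV (\<lambda>j. real (\<beta>$j)) (\<lambda>j. newton_poly (a j))))"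
    unfolding monomial_val_poly_map by (rule supported_polys_prod_power_newton_poly[OF _ assms(1,2)]) simp
  moreover have "scaled_set_sum UNIV (\<lambda>j. real (\<beta>$j)) (\<lambda>j. newton_poly (a j))
      \<subseteq> (\<lambda>y. real m *\<^sub>R y) ` pullback_set S a"
    unfolding scaled_set_sum_mi_real[OF assms(4)] pullback_set_eq using assms(3) by (intro image_mono UN_upper)
  ultimately show ?thesis
    using supported_polys_nat_points_mono by blast
qed

lemma pullback_poly_space_subset:
  assumes "\<And>j. finite {\<alpha>. a j \<alpha> \<noteq> 0}" "\<And>j. {\<alpha>. a j \<alpha> \<noteq> 0} \<noteq> {}"
  shows "(\<lambda>p. p \<circ> poly_map a) ` poly_space S m \<subseteq> poly_space (pullback_set S a) m"
proof
  fix q assume "q \<in> (\<lambda>p. p \<circ> poly_map a) ` poly_space S m"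
  then obtain p where "p \<in> poly_space S m" "q = p \<circ> poly_map a"
    by blast
  then obtain c where c: "finite {\<beta>. c \<beta> \<noteq> 0}" "\<And>\<beta>. c \<beta> \<noteq> 0 \<Longrightarrow> mi_real \<beta> \<in> (\<lambda>x. real m *\<^sub>R x) ` S"
      "q = poly_fun c \<circ> poly_map a"
    unfolding poly_space_def by blast
  have "q = (\<lambda>z. \<Sum>\<beta>\<in>{\<beta>. c \<beta> \<noteq> 0}. c \<beta> * monomial_val (poly_map a z) \<beta>)"
    unfolding c(3) poly_fun_def by (simp add: o_def)
  moreover have "(\<lambda>z. monomial_val (poly_map a z) \<beta>)
      \<in> supported_polys (nat_points ((\<lambda>y. real m *\<^sub>R y) ` pullback_set S a))" if \<beta>: "c \<beta> \<noteq> 0" for \<beta>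
  proof -
    obtain x where "x \<in> S" "mi_real \<beta> = real m *\<^sub>R x"
      using c(2)[OF \<beta>] by blast
    then show ?thesis
      by (rule pullback_monomial_in_supported_polys[OF assms])
  qed
  ultimately show "q \<in> poly_space (pullback_set S a) m"
    unfolding poly_space_eq_supported_polys
    using c(1) by (auto intro!: supported_polys_sum supported_polys_scale)
qed

lemma nonneg_Rats_nat_multiple:
  assumes "(q::real) \<in> \<rat>" "0 \<le> q"
  obtains d n :: nat where "d > 0" "real n = real d * q"
proof -
  obtain a b where ab: "b > 0" "q = of_int a / of_int b"
    using Rats_cases'[OF assms(1)] by metis
  then have "a \<ge> 0"
    using assms(2) by (simp add: zero_le_divide_iff)
  then have "real (nat a) = real (nat b) * q"
    using ab by simp
  then show thesis
    using ab(1) by (intro that[of "nat b" "nat a"]) auto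
qed

lemma rat_point_nat_multiple:
  fixes x :: "real^'n"
  assumes "x \<in> rat_points" "x \<in> nonneg_orthant"
  obtains m :: nat and \<beta> where "m > 0" "mi_real \<beta> = real m *\<^sub>R x"
proof -
  have "\<exists>d n :: nat. d > 0 \<and> real n = real d * x$j" for j
  proof -
    have "x$j \<in> \<rat>" "0 \<le> x$j"
      using assms unfolding rat_points_def nonneg_orthant_def by auto
    then obtain d n :: nat where "d > 0" "real n = real d * x$j"
      by (rule nonneg_Rats_nat_multiple)
    then show ?thesis by blast
  qed
  then obtain d n where dn: "\<And>j. d j > (0::nat)" "\<And>j. real (n j :: nat) = real (d j) * x$j"
    by metis
  define m where "m = (\<Prod>j\<in>UNIV. d j)"
  define \<beta> where "\<beta> = (\<chi> j. (\<Prod>i\<in>UNIV-{j}. d i) * n j)"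
  have "real (\<beta>$j) = real m * x$j" for j
  proof -
    have "real m = real (d j) * (\<Prod>i\<in>UNIV-{j}. real (d i))"
      unfolding m_def by (simp add: prod.remove[of UNIV j] of_nat_prod)
    then show ?thesis
      unfolding \<beta>_def using dn(2)[of j] by (simp add: of_nat_prod)
  qed
  then have "mi_real \<beta> = real m *\<^sub>R x"
    by (simp add: mi_real_def vec_eq_iff)
  moreover have "m > 0"
    unfolding m_def using dn(1) by (simp add: prod_pos)
  ultimately show thesis
    using that by blast
qed

lemma rat_scaled_newton_sum_subset:
  assumes fin: "\<And>j. finite {\<alpha>. a j \<alpha> \<noteq> 0}" and ne: "\<And>j. {\<alpha>. a j \<alpha> \<noteq> 0} \<noteq> {}"
    and T: "convex T" "\<And>m. (\<lambda>p. p \<circ> poly_map a) ` poly_space S m \<subseteq> poly_space T m"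
    and x: "x \<in> S" "x \<in> rat_points" "S \<subseteq> nonneg_orthant"
  shows "scaled_set_sum UNIV (\<lambda>j. x$j) (\<lambda>j. newton_poly (a j)) \<subseteq> T"
proof -
  obtain m \<beta> where m: "m > 0" "mi_real \<beta> = real m *\<^sub>R x"
    using rat_point_nat_multiple x by blast
  have "(\<lambda>z. \<Sum>\<gamma>\<in>{\<beta>}. 1 * monomial_val z \<gamma>) \<in> poly_space S m"
    unfolding poly_space_eq_supported_polys
    by (rule supported_polys_sum_monomials) (use m x(1) in auto)
  then have "(\<lambda>z. monomial_val z \<beta>) \<circ> poly_map a \<in> poly_space T m"
    using T(2) by force
  then have "(\<lambda>z. \<Prod>j\<in>UNIV. poly_fun (a j) z ^ (\<beta>$j)) \<in> supported_polys (nat_points ((\<lambda>y. real m *\<^sub>R y) ` T))"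
    unfolding poly_space_eq_supported_polys by (simp add: o_def monomial_val_poly_map)
  then have "scaled_set_sum UNIV (\<lambda>j. real (\<beta>$j)) (\<lambda>j. newton_poly (a j)) \<subseteq> (\<lambda>y. real m *\<^sub>R y) ` T"
    by (rule scaled_newton_sum_subset[OF fin ne convex_scaling[OF T(1)]])
  then have "(\<lambda>y. real m *\<^sub>R y) ` scaled_set_sum UNIV (\<lambda>j. x$j) (\<lambda>j. newton_poly (a j))
      \<subseteq> (\<lambda>y. real m *\<^sub>R y) ` T"
    unfolding scaled_set_sum_mi_real[OF m(2)] .
  then show ?thesis
    using m(1) by (auto simp: image_subset_iff)
qed

lemma pullback_set_subset:
  assumes fin: "\<And>j. finite {\<alpha>. a j \<alpha> \<noteq> 0}" and ne: "\<And>j. {\<alpha>. a j \<alpha> \<noteq> 0} \<noteq> {}"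
    and T: "closed T" "convex T" "\<And>m. (\<lambda>p. p \<circ> poly_map a) ` poly_space S m \<subseteq> poly_space T m"
    and S: "S \<subseteq> nonneg_orthant" "closure (S \<inter> rat_points) = S"
  shows "pullback_set S a \<subseteq> T"
proof
  fix y assume "y \<in> pullback_set S a"
  then obtain x s where xs: "x \<in> S" "\<forall>j. s j \<in> newton_poly (a j)" "y = (\<Sum>j\<in>UNIV. x$j *\<^sub>R s j)"
    unfolding pullback_set_def by blast
  have "x \<in> closure (S \<inter> rat_points)"
    using xs(1) S(2) by simp
  then obtain X where X: "\<And>k. X k \<in> S \<inter> rat_points" "X \<longlonglongrightarrow> x"
    unfolding closure_sequential by blast
  have "(\<Sum>j\<in>UNIV. X k $ j *\<^sub>R s j) \<in> scaled_set_sum UNIV (\<lambda>j. X k $ j) (\<lambda>j. newton_poly (a j))" for k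
    unfolding scaled_set_sum_def using xs(2) by blast
  then have "(\<Sum>j\<in>UNIV. X k $ j *\<^sub>R s j) \<in> T" for k
    using rat_scaled_newton_sum_subset[OF fin ne T(2,3)] X(1) S(1) by blast
  moreover have "(\<lambda>k. \<Sum>j\<in>UNIV. X k $ j *\<^sub>R s j) \<longlonglongrightarrow> y"
    unfolding xs(3) by (intro tendsto_intros X(2))
  ultimately show "y \<in> T"
    by (rule closed_sequentially[OF T(1)])
qed

theorem proposition8p1:
  fixes S :: "(real^'n) set"
    and a :: "'n \<Rightarrow> nat^'l \<Rightarrow> complex"
  assumes "compact S" and "convex S" and "S \<subseteq> nonneg_orthant" and "0 \<in> S"
    and "closure (S \<inter> rat_points) = S"
    and "\<And>j. finite {\<alpha>. a j \<alpha> \<noteq> 0}"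
    and "\<And>j. {\<alpha>. a j \<alpha> \<noteq> 0} \<noteq> {}"
  defines "adm \<equiv> {T :: (real^'l) set. compact T \<and> convex T \<and> T \<subseteq> nonneg_orthant \<and> 0 \<in> T
      \<and> (\<forall>m. (\<lambda>p. p \<circ> poly_map a) ` poly_space S m \<subseteq> poly_space T m)}"
  shows "pullback_set S a \<in> adm \<and> (\<forall>T\<in>adm. pullback_set S a \<subseteq> T)"
proof
  have "compact (pullback_set S a)"
    unfolding pullback_set_eq using assms(1,6)
    by (intro compact_UN_scaled_set_sum compact_newton_poly)
  moreover have "convex (pullback_set S a)"
    unfolding pullback_set_eq using assms(2,3)
    by (intro convex_UN_scaled_set_sum convex_newton_poly)
  moreover have "pullback_set S a \<subseteq> nonneg_orthant"
    using assms(3) by (rule pullback_set_subset_nonneg_orthant)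
  moreover have "0 \<in> pullback_set S a"
    using assms(4,7) by (rule zero_in_pullback_set)
  moreover have "(\<lambda>p. p \<circ> poly_map a) ` poly_space S m \<subseteq> poly_space (pullback_set S a) m" for m
    using assms(6,7) by (rule pullback_poly_space_subset)
  ultimately show "pullback_set S a \<in> adm"
    unfolding adm_def by blast
  show "\<forall>T\<in>adm. pullback_set S a \<subseteq> T"
  proof
    fix T assume "T \<in> adm"
    then have "closed T" "convex T" "\<And>m. (\<lambda>p. p \<circ> poly_map a) ` poly_space S m \<subseteq> poly_space T m"
      unfolding adm_def by (auto intro: compact_imp_closed)
    then show "pullback_set S a \<subseteq> T"
      by (rule pullback_set_subset[OF assms(6,7) _ _ _ assms(3,5)])
  qed
qed

end
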